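(* For every integer $m\ge2$, the Bernoulli numbers satisfy $$B_{2m}=\frac{-1}{(m+1)(2m+1)}\sum_{j=m-\lfloor m/2\rfloor}^{m-1}\binom{m+1}{2m-2j+1}(1+2j)\,B_{2j}.$$
   Context: $B_m$ denotes the Bernoulli numbers, defined by $\frac{t}{e^t-1}=\sum_{m\ge0}B_m\frac{t^m}{m!}$ (so $B_2=1/6$, $B_4=-1/30$). *)

theory Defs
  imports "HOL-Computational_Algebra.Formal_Power_Series"
begin

definition bernoulli :: "nat \<Rightarrow> rat" where
  "bernoulli m = fact m * fps_nth (fps_X / (fps_exp 1 - 1)) m"

end

theory Submission
  imports Defs "HOL-Computational_Algebra.Polynomial"
begin

text \<open>
  Write \<open>L(p) = \<Sum>\<^sub>i p\<^sub>i B\<^sub>i\<close> for the umbral evaluation of a polynomial at the Bernoulli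
  numbers. The generating function identity \<open>exp t \<cdot> t/(exp t - 1) = (-t)/(exp (-t) - 1)\<close> gives
  \<open>\<Sum>\<^sub>k (n choose k) B\<^sub>k = (-1)\<^sup>n B\<^sub>n\<close>, i.e. \<open>L((-1-x)\<^sup>n) = B\<^sub>n\<close>, so \<open>L\<close> is invariant under the
  reflection \<open>x \<mapsto> -1-x\<close>, and it kills the derivative of every reflection-invariant
  polynomial. Applied to \<open>(x + x\<^sup>2)^(m+1)\<close>, whose coefficients are binomial, and using that
  the odd Bernoulli numbers beyond \<open>B\<^sub>1\<close> vanish, this is the recurrence.
\<close>

unbundle fps_syntax

definition bernoulli_egf :: "rat fps" where
  "bernoulli_egf = fps_X / (fps_exp 1 - 1)"

lemma bernoulli_conv_egf: "bernoulli n = fact n * bernoulli_egf $ n"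
  by (simp add: bernoulli_def bernoulli_egf_def)

lemma subdegree_fps_exp_minus_1: "subdegree (fps_exp (1::rat) - 1) = 1"
  by (rule subdegreeI) auto

lemma bernoulli_egf_times: "bernoulli_egf * (fps_exp 1 - 1) = fps_X"
proof -
  have "fps_exp (1::rat) - 1 \<noteq> 0"
    using subdegree_fps_exp_minus_1 by auto
  moreover have "subdegree (fps_exp (1::rat) - 1) \<le> subdegree (fps_X :: rat fps)"
    by (simp only: subdegree_fps_exp_minus_1) simp
  ultimately show ?thesis
    unfolding bernoulli_egf_def by (rule fps_times_divide_eq)
qed

lemma bernoulli_egf_reflect: "fps_exp 1 * bernoulli_egf = bernoulli_egf oo (- fps_X)"
proof -
  let ?e = "fps_exp (1::rat)" and ?R = "bernoulli_egf oo (- fps_X)"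
  have reflected: "?R * (fps_exp (-1) - 1) = - fps_X"
    using arg_cong[OF bernoulli_egf_times, of "\<lambda>f. f oo (- fps_X)"]
    by (simp add: fps_compose_mult_distrib fps_compose_sub_distrib)
  have inverse: "?e * fps_exp (-1) = 1"
    by (simp flip: fps_exp_add_mult)
  have "?R * (?e - 1) = - (?R * (fps_exp (-1) - 1)) * ?e"
    by (simp add: algebra_simps mult.assoc inverse)
  also have "\<dots> = (?e * bernoulli_egf) * (?e - 1)"
    by (simp add: reflected bernoulli_egf_times mult.assoc mult.commute[of ?e])
  finally show ?thesis
    using subdegree_fps_exp_minus_1 by (auto simp: mult_right_cancel)
qed

lemma bernoulli_binomial_sum:
  "(\<Sum>k\<le>n. of_nat (n choose k) * bernoulli k) = (-1) ^ n * bernoulli n"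
proof -
  have "(\<Sum>k\<le>n. of_nat (n choose k) * bernoulli k)
      = fact n * (\<Sum>k\<le>n. bernoulli_egf $ k * (1 / fact (n - k)))"
    unfolding sum_distrib_left
    by (intro sum.cong) (simp_all add: binomial_fact bernoulli_conv_egf field_simps)
  also have "(\<Sum>k\<le>n. bernoulli_egf $ k * (1 / fact (n - k))) = (bernoulli_egf * fps_exp 1) $ n"
    by (simp add: fps_mult_nth atLeast0AtMost)
  also have "\<dots> = (-1) ^ n * bernoulli_egf $ n"
    by (simp add: mult.commute[of bernoulli_egf] bernoulli_egf_reflect fps_compose_uminus')
  finally show ?thesis
    by (simp add: bernoulli_conv_egf)
qed

lemma bernoulli_odd_eq_0:
  assumes "odd n" and "n \<noteq> 1"
  shows "bernoulli n = 0"
proof -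
  have "fps_exp 1 * bernoulli_egf = bernoulli_egf + fps_X"
    using bernoulli_egf_times by (simp add: algebra_simps)
  then have "bernoulli_egf $ n = - bernoulli_egf $ n"
    using arg_cong[OF bernoulli_egf_reflect, of "\<lambda>f. f $ n"] assms
    by (simp add: fps_compose_uminus')
  then show ?thesis
    by (simp add: bernoulli_conv_egf)
qed

text \<open>The functional \<open>L\<close>; the cut-off \<open>N\<close>, any bound on the degrees involved, makes it
  linear on all of \<open>rat poly\<close>.\<close>

definition bernoulli_functional :: "nat \<Rightarrow> rat poly \<Rightarrow> rat" where
  "bernoulli_functional N p = (\<Sum>i\<le>N. coeff p i * bernoulli i)"

lemma bernoulli_functional_sum:
  "bernoulli_functional N (sum f A) = (\<Sum>x\<in>A. bernoulli_functional N (f x))"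
  unfolding bernoulli_functional_def coeff_sum sum_distrib_right by (rule sum.swap)

lemma bernoulli_functional_smult:
  "bernoulli_functional N (smult a p) = a * bernoulli_functional N p"
  unfolding bernoulli_functional_def by (simp add: sum_distrib_left mult.assoc)

lemma bernoulli_functional_uminus:
  "bernoulli_functional N (- p) = - bernoulli_functional N p"
  unfolding bernoulli_functional_def by (simp add: sum_negf)

lemma pcompose_monom: "pcompose (monom a n) q = smult a (q ^ n)"
  by (induction n) (simp_all add: monom_Suc pcompose_pCons monom_0 one_pCons)

lemma pcompose_power: "pcompose (p ^ n) q = pcompose p q ^ n"
  by (induction n) (simp_all add: pcompose_mult pcompose_1)

lemma coeff_one_plus_x_power: "coeff ([:1, 1:] ^ n) k = (of_nat (n choose k) :: 'a::comm_semiring_1)"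
proof (cases "k \<le> n")
  case True
  then show ?thesis by (simp add: coeff_linear_poly_power)
next
  case False
  have "degree ([:1, 1::'a:] ^ n) \<le> n"
    by (rule order.trans[OF degree_power_le]) simp
  with False show ?thesis by (simp add: coeff_eq_0 binomial_eq_0)
qed

lemma bernoulli_functional_reflect_power:
  assumes "n \<le> N"
  shows "bernoulli_functional N ([:-1, -1:] ^ n) = bernoulli n"
proof -
  have "[:-1, -1:] ^ n = smult ((-1) ^ n) ([:1, 1:] ^ n :: rat poly)"
    using smult_power[of "-1" "[:1, 1:]" n] by simp
  then have "bernoulli_functional N ([:-1, -1:] ^ n)
      = (-1) ^ n * (\<Sum>k\<le>N. of_nat (n choose k) * bernoulli k)"
    by (simp only: bernoulli_functional_smult)
       (simp add: bernoulli_functional_def coeff_one_plus_x_power)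
  also have "(\<Sum>k\<le>N. of_nat (n choose k) * bernoulli k) = (\<Sum>k\<le>n. of_nat (n choose k) * bernoulli k)"
    using assms by (intro sum.mono_neutral_right) auto
  finally show ?thesis
    by (simp add: bernoulli_binomial_sum flip: power_add)
qed

lemma bernoulli_functional_reflect:
  assumes "degree p \<le> N"
  shows "bernoulli_functional N (pcompose p [:-1, -1:]) = bernoulli_functional N p"
proof -
  have "bernoulli_functional N (pcompose p [:-1, -1:])
      = (\<Sum>i\<le>degree p. coeff p i * bernoulli_functional N ([:-1, -1:] ^ i))"
    by (subst poly_as_sum_of_monoms[symmetric, of p])
       (simp add: pcompose_sum pcompose_monom bernoulli_functional_sum bernoulli_functional_smult)
  also have "\<dots> = (\<Sum>i\<le>degree p. coeff p i * bernoulli i)"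
    using assms by (intro sum.cong) (simp_all add: bernoulli_functional_reflect_power)
  also have "\<dots> = bernoulli_functional N p"
    unfolding bernoulli_functional_def using assms
    by (intro sum.mono_neutral_left) (auto simp: coeff_eq_0)
  finally show ?thesis .
qed

lemma bernoulli_functional_pderiv_eq_0:
  assumes "pcompose p [:-1, -1:] = p" and "degree p \<le> Suc N"
  shows "bernoulli_functional N (pderiv p) = 0"
proof -
  have "pderiv p = pcompose (pderiv p) [:-1, -1:] * [:-1:]"
    using pderiv_pcompose[of p "[:-1, -1:]"] assms(1) by (simp add: pderiv_pCons)
  then have antisymmetric: "pcompose (pderiv p) [:-1, -1:] = - pderiv p"
    by simp
  have "degree (pderiv p) \<le> N"
    using assms(2) by (simp add: degree_pderiv)
  then have "bernoulli_functional N (pderiv p) = - bernoulli_functional N (pderiv p)"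
    using bernoulli_functional_reflect[of "pderiv p" N]
    by (simp add: antisymmetric bernoulli_functional_uminus)
  then show ?thesis
    by simp
qed

lemma coeff_x_plus_x2_power:
  "coeff ([:0, 1, 1:] ^ n) k = (if n \<le> k then of_nat (n choose (k - n)) else (0::'a::comm_semiring_1))"
proof -
  have "[:0, 1, 1::'a:] = monom 1 1 * [:1, 1:]"
    by (simp add: monom_Suc monom_0)
  then have "[:0, 1, 1::'a:] ^ n = monom 1 n * [:1, 1:] ^ n"
    by (simp only: power_mult_distrib monom_power) simp
  then show ?thesis
    by (simp add: coeff_monom_mult coeff_one_plus_x_power)
qed

lemma coeff_pderiv_x_plus_x2_power:
  "coeff (pderiv ([:0, 1, 1:] ^ (m+1))) i =
    (if m \<le> i then of_nat (i+1) * of_nat ((m+1) choose (i - m)) else (0::'a::idom))"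
  unfolding coeff_pderiv coeff_x_plus_x2_power by simp

lemma pcompose_x_plus_x2_reflect: "pcompose [:0, 1, 1:] [:-1, -1:] = [:0, 1, 1::'a::comm_ring_1:]"
  by (simp add: pcompose_pCons)

lemma bernoulli_functional_pderiv_x_plus_x2_power:
  "bernoulli_functional (2*m+1) (pderiv ([:0, 1, 1:] ^ (m+1))) = 0"
proof (rule bernoulli_functional_pderiv_eq_0)
  show "pcompose ([:0, 1, 1:] ^ (m+1)) [:-1, -1:] = ([:0, 1, 1:] ^ (m+1) :: rat poly)"
    by (simp only: pcompose_power pcompose_x_plus_x2_reflect)
  show "degree ([:0, 1, 1:] ^ (m+1) :: rat poly) \<le> Suc (2*m+1)"
    using degree_power_le[of "[:0, 1, 1::rat:]" "m+1"] by simp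
qed

lemma sum_lessThan_even_odd: "(\<Sum>i<2*(n::nat). f i) = (\<Sum>j<n. f (2*j) + f (2*j + 1))"
  by (induction n) (simp_all add: add_ac)

lemma bernoulli_even_recurrence:
  assumes "m \<ge> 2"
  shows "(\<Sum>j = m - m div 2..m.
           of_nat ((m+1) choose (2*m - 2*j + 1)) * of_nat (1 + 2*j) * bernoulli (2*j)) = 0"
proof -
  define f where
    "f i = (if m \<le> i then of_nat (i+1) * of_nat ((m+1) choose (i - m)) else 0) * bernoulli i" for i
  have "(\<Sum>i<2*(m+1). f i) = 0"
    using bernoulli_functional_pderiv_x_plus_x2_power[of m]
    unfolding bernoulli_functional_def coeff_pderiv_x_plus_x2_power f_def[symmetric]
    by (simp add: lessThan_Suc_atMost)
  moreover have "f (2*j+1) = 0" for j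
    using assms by (cases j) (simp_all add: f_def bernoulli_odd_eq_0)
  ultimately have "(\<Sum>j<m+1. f (2*j)) = 0"
    by (simp add: sum_lessThan_even_odd)
  moreover have "(\<Sum>j<m+1. f (2*j)) = (\<Sum>j = m - m div 2..m. f (2*j))"
    by (intro sum.mono_neutral_right) (auto simp: f_def)
  moreover have "f (2*j) = of_nat ((m+1) choose (2*m - 2*j + 1)) * of_nat (1 + 2*j) * bernoulli (2*j)"
    if "j \<in> {m - m div 2..m}" for j
  proof -
    from that have "m \<le> 2*j" "j \<le> m" by auto
    then have "(m+1) choose (2*j - m) = (m+1) choose (2*m - 2*j + 1)"
      by (subst binomial_symmetric) (simp_all add: Suc_diff_le)
    with \<open>m \<le> 2*j\<close> show ?thesis
      by (simp add: f_def del: binomial_Suc_Suc)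
  qed
  ultimately show ?thesis
    by simp
qed

theorem mainTheorem5:
  fixes m :: nat
  assumes "m \<ge> 2"
  shows "bernoulli (2*m) =
    - 1 / (of_nat (m+1) * of_nat (2*m+1)) *
      (\<Sum>j = m - m div 2 .. m - 1.
         of_nat ((m+1) choose (2*m - 2*j + 1)) * of_nat (1 + 2*j) * bernoulli (2*j))"
proof -
  define c where "c j = of_nat ((m+1) choose (2*m - 2*j + 1)) * of_nat (1 + 2*j) * bernoulli (2*j)"
    for j
  have "{m - m div 2..m} = insert m {m - m div 2..m - 1}"
    using assms by auto
  then have "(\<Sum>j = m - m div 2..m. c j) = (\<Sum>j = m - m div 2..m - 1. c j) + c m"
    using assms by simp
  moreover have "c m = of_nat (m+1) * of_nat (2*m+1) * bernoulli (2*m)"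
    by (simp add: c_def)
  ultimately have "of_nat (m+1) * of_nat (2*m+1) * bernoulli (2*m) = - (\<Sum>j = m - m div 2..m - 1. c j)"
    using bernoulli_even_recurrence[OF assms] by (simp add: c_def)
  moreover have "b = - 1 / k * t" if "k \<noteq> 0" and "k * b = - t" for k b t :: rat
    using that by (simp add: field_simps)
  ultimately show ?thesis
    unfolding c_def[symmetric] by simp
qed

end
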